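(* Let $p\in[1,\infty]$ and for $\lambda\in\mathbb{R}$ let $S_\lambda$ be the operator on $L^p(0,1)$ given by $(S_\lambda f)(t)=\int_0^1 e^{\lambda(t-s)}f(s)\,ds$. Then $\|S_\lambda\|_p\sim C_p\,e^\lambda/\lambda$ as $\lambda\to\infty$ through $\mathbb{R}^+$. Moreover, define $f_\lambda(t)=e^{-g(\lambda)\lambda t}$ if $p=1$, $f_\lambda(t)=e^{-\lambda t/(p-1)}$ if $1<p<\infty$, and $f_\lambda(t)=1$ if $p=\infty$, where $g$ is any function with $g(\lambda)\to\infty$ as $\lambda\to\infty$. Then $(f_\lambda)$ is asymptotically extremal for $(S_\lambda)$, i.e. $\|S_\lambda f_\lambda\|_p\sim\|S_\lambda\|_p\|f_\lambda\|_p$ as $\lambda\to\infty$.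
   Context: $C_p=1/(p^{1/p}q^{1/q})$ if $1<p<\infty$ where $1/p+1/q=1$, and $C_p=1$ if $p=1$ or $p=\infty$. $\|\cdot\|_p$ denotes both the $L^p(0,1)$ norm and the corresponding operator norm. $a_\lambda\sim b_\lambda$ means $a_\lambda/b_\lambda\to1$. *)

theory Defs
  imports "HOL-Analysis.Analysis" "HOL-Probability.Essential_Supremum" "HOL-Library.Landau_Symbols"
begin

definition M01 :: "real measure" where
  "M01 = restrict_space lborel {0<..<1}"

definition Lp_norm :: "ereal \<Rightarrow> (real \<Rightarrow> real) \<Rightarrow> ereal" where
  "Lp_norm p f =
     (if p = \<infinity> then esssup M01 (\<lambda>x. ereal \<bar>f x\<bar>)
      else (let I = (\<integral>\<^sup>+ x. ennreal (\<bar>f x\<bar> powr real_of_ereal p) \<partial>M01)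
            in if I = \<infinity> then \<infinity> else ereal (enn2real I powr (1 / real_of_ereal p))))"

definition S_op :: "real \<Rightarrow> (real \<Rightarrow> real) \<Rightarrow> real \<Rightarrow> real" where
  "S_op l f t = (\<integral>s. exp (l * (t - s)) * f s \<partial>M01)"

definition S_opnorm :: "ereal \<Rightarrow> real \<Rightarrow> ereal" where
  "S_opnorm p l = Sup {Lp_norm p (S_op l f) | f. f \<in> borel_measurable M01 \<and> Lp_norm p f \<le> 1}"

definition C_const :: "ereal \<Rightarrow> real" where
  "C_const p = (if p = 1 \<or> p = \<infinity> then 1
     else (let r = real_of_ereal p; q = r / (r - 1) in 1 / (r powr (1 / r) * q powr (1 / q))))"

definition f_ext :: "ereal \<Rightarrow> (real \<Rightarrow> real) \<Rightarrow> real \<Rightarrow> real \<Rightarrow> real" where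
  "f_ext p g l t = (if p = 1 then exp (- g l * l * t)
     else if p = \<infinity> then 1
     else exp (- l * t / (real_of_ereal p - 1)))"

end

theory Submission
  imports Defs "HOL-Real_Asymp.Real_Asymp"
begin

(*
  S_l has rank one: S_l f = <f, e_(-l)> e_l, where e_a t = exp (a t) and <f, w> is the
  integral of f w over (0,1).  Hence ||S_l f||_p = |<f, e_(-l)>| ||e_l||_p, and Hoelder's
  inequality together with its equality cases gives ||S_l||_p = ||e_l||_p ||e_(-l)||_q
  exactly: the supremum is attained at f = e_(-l/(p-1)) for 1 < p < oo and at f = 1 for
  p = oo, and it is approached by f = e_(-k), k -> oo, for p = 1.  Both norms are explicit
  and their product is asymptotic to C_p exp l / l.  The same computation gives
  |<f_l, e_(-l)>| ~ ||e_(-l)||_q ||f_l||_p, which is the asymptotic extremality of f_l.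
*)

lemma space_M01 [simp]: "space M01 = {0<..<1}"
  by (simp add: M01_def)

lemma borel_measurable_M01: "f \<in> borel_measurable borel \<Longrightarrow> f \<in> borel_measurable M01"
  unfolding M01_def by (rule measurable_restrict_space1) simp

lemma AE_M01_ex_in_interval:
  assumes "AE t in M01. P t" and "0 \<le> a" "a < b" "b \<le> 1"
  shows "\<exists>t\<in>{a<..<b}. P t"
proof (rule ccontr)
  assume none: "\<not> (\<exists>t\<in>{a<..<b}. P t)"
  have "AE t in lborel. t \<in> {0<..<1} \<longrightarrow> P t"
    using assms(1) unfolding M01_def by (subst (asm) AE_restrict_space_iff) auto
  then obtain N where N: "{t \<in> space lborel. \<not> (t \<in> {0<..<1} \<longrightarrow> P t)} \<subseteq> N"
    "emeasure lborel N = 0" "N \<in> sets lborel"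
    by (elim AE_E) blast
  have "{a<..<b} \<subseteq> N"
    using N(1) none assms(2-4) by force
  then have "emeasure lborel {a<..<b} \<le> emeasure lborel N"
    using N(3) by (rule emeasure_mono)
  then show False
    using N(2) assms(3) by simp
qed

lemma esssup_M01_ge:
  assumes f: "continuous_on {0..1} f" and t0: "t0 \<in> {0..1}"
  shows "ereal (f t0) \<le> esssup M01 (\<lambda>t. ereal (f t))"
proof (rule ccontr)
  assume "\<not> ereal (f t0) \<le> esssup M01 (\<lambda>t. ereal (f t))"
  then obtain w where w: "esssup M01 (\<lambda>t. ereal (f t)) < ereal w" "w < f t0"
    by (metis ereal_dense2 less_ereal.simps(1) not_le)
  have ae: "AE t in M01. f t \<le> w"
    using esssup_AE[where M=M01 and f="\<lambda>t. ereal (f t)"]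
    by (rule eventually_mono) (metis w(1) le_less_trans less_ereal.simps(1) less_imp_le)
  obtain d where d: "d > 0" "\<And>t. t \<in> {0..1} \<Longrightarrow> dist t t0 < d \<Longrightarrow> dist (f t) (f t0) < f t0 - w"
    using f t0 w(2) unfolding continuous_on_iff by (metis diff_gt_0_iff_gt)
  have above: "w < f t" if "t \<in> {0..1}" "dist t t0 < d" for t
    using d(2)[OF that] by (auto simp: dist_real_def)
  obtain t where "t \<in> {max 0 (t0 - d)<..<min 1 (t0 + d)}" "f t \<le> w"
    using AE_M01_ex_in_interval[OF ae, of "max 0 (t0 - d)" "min 1 (t0 + d)"] t0 d(1) by auto
  then show False
    using above[of t] by (auto simp: dist_real_def abs_less_iff)
qed

definition exp_mean :: "real \<Rightarrow> real" where
  "exp_mean b = (if b = 0 then 1 else (exp b - 1) / b)"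

lemma exp_mean_pos: "0 < exp_mean b"
  by (cases "b > 0") (auto simp: exp_mean_def divide_neg_neg)

lemma abs_exp_mean [simp]: "\<bar>exp_mean b\<bar> = exp_mean b"
  using exp_mean_pos[of b] by simp

lemma exp_mean_minus: "y \<noteq> 0 \<Longrightarrow> exp_mean (- y) = (1 - exp (- y)) / y"
  by (simp add: exp_mean_def minus_divide_left)

lemma has_integral_exp_01: "((\<lambda>t. exp (b * t)) has_integral exp_mean b) {0<..<1}"
proof (cases "b = 0")
  case True
  then show ?thesis
    using has_integral_const_real[of "1::real" 0 1] by (simp add: exp_mean_def has_integral_Icc_iff_Ioo)
next
  case False
  have "((\<lambda>t. exp (b * t)) has_integral (exp (b * 1) / b - exp (b * 0) / b)) {0..1}"
    by (rule fundamental_theorem_of_calculus)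
      (use False in \<open>auto intro!: derivative_eq_intros
        simp flip: has_real_derivative_iff_has_vector_derivative\<close>)
  then show ?thesis
    using False by (simp add: exp_mean_def diff_divide_distrib has_integral_Icc_iff_Ioo)
qed

lemma nn_integral_exp_M01: "(\<integral>\<^sup>+t. ennreal (exp (b * t)) \<partial>M01) = ennreal (exp_mean b)"
  unfolding M01_def
  by (subst nn_integral_restrict_space)
    (auto intro!: nn_integral_has_integral_lebesgue' has_integral_exp_01 less_imp_le[OF exp_mean_pos])

lemma integral_exp_M01: "(\<integral>t. exp (b * t) \<partial>M01) = exp_mean b"
  using nn_integral_exp_M01[of b] exp_mean_pos[of b]
  by (subst integral_eq_nn_integral) (auto intro!: borel_measurable_M01)

definition exp_moment :: "real \<Rightarrow> (real \<Rightarrow> real) \<Rightarrow> real" where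
  "exp_moment a f = (\<integral>s. exp (a * s) * f s \<partial>M01)"

lemma exp_moment_exp: "exp_moment b (\<lambda>t. x * exp (a * t)) = x * exp_mean (a + b)"
proof -
  have "(\<lambda>s. exp (b * s) * (x * exp (a * s))) = (\<lambda>s. x * exp ((a + b) * s))"
    by (simp add: fun_eq_iff distrib_right exp_add)
  then show ?thesis
    unfolding exp_moment_def by (simp add: integral_exp_M01)
qed

definition exp_norm :: "ereal \<Rightarrow> real \<Rightarrow> real" where
  "exp_norm p a = (if p = \<infinity> then exp (max a 0)
     else exp_mean (real_of_ereal p * a) powr (1 / real_of_ereal p))"

lemma exp_norm_pos: "0 < exp_norm p a"
  using exp_mean_pos[of "real_of_ereal p * a"] by (simp add: exp_norm_def)

lemma exp_norm_infinity [simp]: "exp_norm \<infinity> a = exp (max a 0)"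
  by (simp add: exp_norm_def)

lemma exp_norm_one [simp]: "exp_norm 1 a = exp_mean a"
  using exp_mean_pos[of a] by (simp add: exp_norm_def)

lemma exp_norm_ereal: "exp_norm (ereal P) a = exp_mean (P * a) powr (1 / P)"
  by (simp add: exp_norm_def)

lemma Lp_norm_exp_finite:
  assumes "1 \<le> p" "p \<noteq> \<infinity>"
  shows "Lp_norm p (\<lambda>t. x * exp (a * t)) = ereal (\<bar>x\<bar> * exp_norm p a)"
proof -
  define P where "P = real_of_ereal p"
  have P: "1 \<le> P"
    using assms unfolding P_def by (cases p) auto
  have "ennreal (\<bar>x * exp (a * t)\<bar> powr P) = ennreal (\<bar>x\<bar> powr P) * ennreal (exp ((P * a) * t))" for t
    by (simp add: abs_mult powr_mult exp_powr_real ennreal_mult' mult_ac)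
  then have "(\<integral>\<^sup>+t. ennreal (\<bar>x * exp (a * t)\<bar> powr P) \<partial>M01) = ennreal (\<bar>x\<bar> powr P * exp_mean (P * a))"
    by (simp add: nn_integral_cmult borel_measurable_M01 nn_integral_exp_M01 ennreal_mult')
  moreover have "(\<bar>x\<bar> powr P * exp_mean (P * a)) powr (1 / P) = \<bar>x\<bar> * exp_mean (P * a) powr (1 / P)"
    using P exp_mean_pos[of "P * a"] by (simp add: powr_mult powr_powr)
  ultimately show ?thesis
    using assms exp_mean_pos[of "P * a"]
    by (simp add: Lp_norm_def exp_norm_def P_def [symmetric] Let_def)
qed

lemma Lp_norm_exp_infinity:
  "Lp_norm \<infinity> (\<lambda>t. x * exp (a * t)) = ereal (\<bar>x\<bar> * exp (max a 0))"
proof -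
  have "esssup M01 (\<lambda>t. ereal (\<bar>x\<bar> * exp (a * t))) \<le> ereal (\<bar>x\<bar> * exp (max a 0))"
  proof (rule esssup_I)
    show "(\<lambda>t. ereal (\<bar>x\<bar> * exp (a * t))) \<in> borel_measurable M01"
      by (intro borel_measurable_M01) measurable
    have "a * t \<le> max a 0" if "t \<in> {0<..<1}" for t
      using that by (cases "a \<ge> 0") (auto simp: mult_left_le intro: mult_nonpos_nonneg)
    then show "AE t in M01. ereal (\<bar>x\<bar> * exp (a * t)) \<le> ereal (\<bar>x\<bar> * exp (max a 0))"
      by (intro AE_I2) (simp add: mult_left_mono)
  qed
  moreover have "ereal (\<bar>x\<bar> * exp (max a 0)) \<le> esssup M01 (\<lambda>t. ereal (\<bar>x\<bar> * exp (a * t)))"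
  proof -
    have "continuous_on {0..1} (\<lambda>t. \<bar>x\<bar> * exp (a * t))"
      by (intro continuous_intros)
    from esssup_M01_ge[OF this, of 0] esssup_M01_ge[OF this, of 1] show ?thesis
      by (cases "a \<ge> 0") (auto simp: max_def)
  qed
  ultimately show ?thesis
    by (simp add: Lp_norm_def abs_mult)
qed

lemma Lp_norm_exp:
  assumes "1 \<le> p"
  shows "Lp_norm p (\<lambda>t. x * exp (a * t)) = ereal (\<bar>x\<bar> * exp_norm p a)"
  using assms Lp_norm_exp_finite[OF assms] Lp_norm_exp_infinity
  by (cases "p = \<infinity>") simp_all

lemma Lp_norm_le_1_finite:
  assumes "1 \<le> p" "p \<noteq> \<infinity>" "Lp_norm p f \<le> 1"
  shows "(\<integral>\<^sup>+x. ennreal (\<bar>f x\<bar> powr real_of_ereal p) \<partial>M01) \<le> 1"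
proof -
  define P where "P = real_of_ereal p"
  define I where "I = (\<integral>\<^sup>+x. ennreal (\<bar>f x\<bar> powr P) \<partial>M01)"
  have P: "0 < P"
    using assms(1,2) unfolding P_def by (cases p) auto
  have I: "I \<noteq> \<infinity>" "enn2real I powr (1 / P) \<le> 1"
    using assms(2,3) unfolding Lp_norm_def I_def [symmetric] P_def [symmetric] Let_def
    by (auto split: if_splits)
  have "enn2real I \<le> 1"
  proof (rule ccontr)
    assume "\<not> enn2real I \<le> 1"
    then have "1 < enn2real I powr (1 / P)"
      using P by (intro gr_one_powr) auto
    then show False
      using I(2) by simp
  qed
  moreover have "I = ennreal (enn2real I)"
    using I(1) by (simp add: less_top)
  ultimately show ?thesis
    unfolding I_def [symmetric] P_def [symmetric] by (metis ennreal_le_1)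
qed

lemma Lp_norm_le_1_infinity:
  assumes "Lp_norm \<infinity> f \<le> 1"
  shows "AE x in M01. \<bar>f x\<bar> \<le> 1"
  using esssup_AE[where M=M01 and f="\<lambda>x. ereal \<bar>f x\<bar>"]
proof (rule eventually_mono)
  fix x
  assume "ereal \<bar>f x\<bar> \<le> esssup M01 (\<lambda>x. ereal \<bar>f x\<bar>)"
  also have "\<dots> \<le> 1"
    using assms by (simp add: Lp_norm_def)
  finally show "\<bar>f x\<bar> \<le> 1"
    by (simp add: one_ereal_def)
qed

lemma abs_exp_moment_le_nn_integral:
  "ennreal \<bar>exp_moment a f\<bar> \<le> (\<integral>\<^sup>+s. ennreal (exp (a * s) * \<bar>f s\<bar>) \<partial>M01)"
proof (cases "integrable M01 (\<lambda>s. exp (a * s) * f s)")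
  case True
  then show ?thesis
    using integral_norm_bound_ennreal[OF True] by (simp add: exp_moment_def abs_mult)
qed (simp add: exp_moment_def not_integrable_integral_eq)

lemma abs_exp_moment_le_L1:
  assumes f: "f \<in> borel_measurable M01" and "(\<integral>\<^sup>+s. ennreal \<bar>f s\<bar> \<partial>M01) \<le> 1"
  shows "\<bar>exp_moment a f\<bar> \<le> exp (max a 0)"
proof -
  have "(\<integral>\<^sup>+s. ennreal (exp (a * s) * \<bar>f s\<bar>) \<partial>M01) \<le> (\<integral>\<^sup>+s. ennreal (exp (max a 0)) * ennreal \<bar>f s\<bar> \<partial>M01)"
  proof (intro nn_integral_mono_AE AE_I2)
    fix s
    assume "s \<in> space M01"
    then have "a * s \<le> max a 0"
      by (cases "a \<ge> 0") (auto simp: mult_left_le intro: mult_nonpos_nonneg)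
    then show "ennreal (exp (a * s) * \<bar>f s\<bar>) \<le> ennreal (exp (max a 0)) * ennreal \<bar>f s\<bar>"
      by (simp add: ennreal_mult' [symmetric] mult_right_mono)
  qed
  also have "\<dots> \<le> ennreal (exp (max a 0))"
    using assms by (simp add: nn_integral_cmult mult_left_le)
  finally show ?thesis
    using abs_exp_moment_le_nn_integral[of a f] by (simp add: ennreal_le_iff [symmetric] del: ennreal_le_iff)
qed

lemma abs_exp_moment_le_Linf:
  assumes "AE s in M01. \<bar>f s\<bar> \<le> 1"
  shows "\<bar>exp_moment a f\<bar> \<le> exp_mean a"
proof -
  have "(\<integral>\<^sup>+s. ennreal (exp (a * s) * \<bar>f s\<bar>) \<partial>M01) \<le> (\<integral>\<^sup>+s. ennreal (exp (a * s)) \<partial>M01)"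
    using assms by (intro nn_integral_mono_AE) (auto elim!: eventually_mono intro!: ennreal_leI mult_left_le)
  also have "\<dots> = ennreal (exp_mean a)"
    by (rule nn_integral_exp_M01)
  finally show ?thesis
    using abs_exp_moment_le_nn_integral[of a f] exp_mean_pos[of a]
    by (simp add: ennreal_le_iff [symmetric] del: ennreal_le_iff)
qed

lemma abs_exp_moment_le_Lp:
  fixes P Q :: real
  assumes PQ: "1 < P" "1 < Q" "1 / P + 1 / Q = 1"
    and f: "f \<in> borel_measurable M01" and f_le: "(\<integral>\<^sup>+s. ennreal (\<bar>f s\<bar> powr P) \<partial>M01) \<le> 1"
  shows "\<bar>exp_moment a f\<bar> \<le> exp_mean (Q * a) powr (1 / Q)"
proof -
  define J where "J = exp_mean (Q * a)"
  define B where "B = J powr (1 / Q)"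
  have J: "0 < J" and B: "0 < B"
    using exp_mean_pos[of "Q * a"] by (simp_all add: J_def B_def)
  \<comment> \<open>Young's inequality, applied to \<open>\<bar>f s\<bar>\<close> and \<open>exp (a * s) / B\<close>, splits the integrand into
    two pieces whose integrals are at most \<open>B / P\<close> and \<open>B / Q\<close>.\<close>
  have young: "exp (a * s) * \<bar>f s\<bar> \<le> B / P * \<bar>f s\<bar> powr P + B / (Q * J) * exp ((Q * a) * s)" for s
  proof -
    have "(exp (a * s) / B) powr Q = exp ((Q * a) * s) / J"
      using B PQ J by (simp add: powr_divide B_def powr_powr exp_powr_real mult_ac)
    moreover have "\<bar>f s\<bar> * (exp (a * s) / B) \<le> \<bar>f s\<bar> powr P / P + (exp (a * s) / B) powr Q / Q"
      using PQ B by (intro Youngs_inequality) auto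
    ultimately have "\<bar>f s\<bar> * (exp (a * s) / B) \<le> \<bar>f s\<bar> powr P / P + exp ((Q * a) * s) / (Q * J)"
      by (simp add: mult.commute)
    from mult_left_mono[OF this less_imp_le[OF B]] show ?thesis
      using B by (simp add: field_simps)
  qed
  have "(\<integral>\<^sup>+s. ennreal (exp (a * s) * \<bar>f s\<bar>) \<partial>M01)
      \<le> (\<integral>\<^sup>+s. ennreal (B / P) * ennreal (\<bar>f s\<bar> powr P) + ennreal (B / (Q * J)) * ennreal (exp ((Q * a) * s)) \<partial>M01)"
    using young PQ B J
    by (intro nn_integral_mono) (simp add: ennreal_mult' [symmetric] ennreal_plus [symmetric] ennreal_leI
        del: ennreal_plus)
  also have "\<dots> = ennreal (B / P) * (\<integral>\<^sup>+s. ennreal (\<bar>f s\<bar> powr P) \<partial>M01)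
      + ennreal (B / (Q * J)) * (\<integral>\<^sup>+s. ennreal (exp ((Q * a) * s)) \<partial>M01)"
    using f by (simp add: nn_integral_add nn_integral_cmult borel_measurable_M01)
  also have "\<dots> \<le> ennreal (B / P) + ennreal (B / (Q * J)) * ennreal J"
    using f_le by (intro add_mono) (simp_all add: nn_integral_exp_M01 J_def mult_left_le)
  also have "\<dots> = ennreal B"
    using B J PQ by (simp add: ennreal_mult' [symmetric] ennreal_plus [symmetric] add_divide_distrib [symmetric]
        field_simps del: ennreal_plus)
  finally show ?thesis
    using abs_exp_moment_le_nn_integral[of a f] B
    by (simp add: B_def J_def ennreal_le_iff [symmetric] del: ennreal_le_iff)
qed

definition conjugate_exponent :: "ereal \<Rightarrow> ereal" where
  "conjugate_exponent p = (if p = 1 then \<infinity> else if p = \<infinity> then 1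
     else ereal (real_of_ereal p / (real_of_ereal p - 1)))"

lemma exponent_cases:
  fixes p :: ereal
  assumes "1 \<le> p"
  obtains "p = 1" | "p = \<infinity>" | P where "p = ereal P" "1 < P"
  using assms by (cases p) force+

lemma conjugate_exponent_ereal:
  assumes "1 < P"
  shows "conjugate_exponent (ereal P) = ereal (P / (P - 1))"
  using assms by (simp add: conjugate_exponent_def one_ereal_def)

lemma conjugate_exponent_real:
  fixes P :: real
  assumes "1 < P"
  shows "1 < P / (P - 1)" "1 / P + 1 / (P / (P - 1)) = 1"
  using assms by (auto simp: field_simps)

lemma abs_exp_moment_le:
  assumes p: "1 \<le> p" and f: "f \<in> borel_measurable M01" and f_le: "Lp_norm p f \<le> 1"
  shows "\<bar>exp_moment a f\<bar> \<le> exp_norm (conjugate_exponent p) a"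
  using p
proof (cases rule: exponent_cases)
  case 1
  then show ?thesis
    using abs_exp_moment_le_L1[OF f] Lp_norm_le_1_finite[OF p _ f_le]
    by (simp add: conjugate_exponent_def)
next
  case 2
  then show ?thesis
    using abs_exp_moment_le_Linf Lp_norm_le_1_infinity f_le
    by (simp add: conjugate_exponent_def)
next
  case (3 P)
  then show ?thesis
    using abs_exp_moment_le_Lp[OF _ conjugate_exponent_real f] Lp_norm_le_1_finite[OF p _ f_le]
    by (simp add: conjugate_exponent_ereal exp_norm_ereal)
qed

lemma S_op_eq: "S_op l f = (\<lambda>t. exp_moment (-l) f * exp (l * t))"
proof
  fix t
  have "(\<lambda>s. exp (l * (t - s)) * f s) = (\<lambda>s. exp (l * t) * (exp (-l * s) * f s))"
    by (simp add: fun_eq_iff right_diff_distrib exp_diff exp_minus field_simps)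
  then have "S_op l f t = exp (l * t) * exp_moment (-l) f"
    unfolding S_op_def exp_moment_def by (simp only: integral_mult_right_zero)
  then show "S_op l f t = exp_moment (-l) f * exp (l * t)"
    by (simp add: mult.commute)
qed

lemma Lp_norm_S_op:
  assumes "1 \<le> p"
  shows "Lp_norm p (S_op l f) = ereal (\<bar>exp_moment (-l) f\<bar> * exp_norm p l)"
  unfolding S_op_eq by (rule Lp_norm_exp[OF assms])

lemma S_opnorm_le:
  assumes p: "1 \<le> p"
  shows "S_opnorm p l \<le> ereal (exp_norm p l * exp_norm (conjugate_exponent p) (-l))"
  unfolding S_opnorm_def
proof (rule Sup_least, clarify)
  fix f
  assume "f \<in> borel_measurable M01" "Lp_norm p f \<le> 1"
  from abs_exp_moment_le[OF p this]
  show "Lp_norm p (S_op l f) \<le> ereal (exp_norm p l * exp_norm (conjugate_exponent p) (-l))"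
    using exp_norm_pos[of p l] by (simp add: Lp_norm_S_op[OF p] mult.commute mult_left_mono)
qed

lemma S_opnorm_ge_exp:
  assumes p: "1 \<le> p"
  shows "ereal (exp_norm p l * (exp_mean (a - l) / exp_norm p a)) \<le> S_opnorm p l"
proof -
  define h where "h = (\<lambda>t. 1 / exp_norm p a * exp (a * t))"
  have "h \<in> borel_measurable M01"
    unfolding h_def by (intro borel_measurable_M01) measurable
  moreover have "Lp_norm p h = 1"
    using exp_norm_pos[of p a] unfolding h_def Lp_norm_exp[OF p] by simp
  ultimately have "Lp_norm p (S_op l h) \<le> S_opnorm p l"
    unfolding S_opnorm_def by (intro Sup_upper) auto
  moreover have "exp_moment (-l) h = exp_mean (a - l) / exp_norm p a"
    unfolding h_def exp_moment_exp by simp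
  ultimately show ?thesis
    using exp_norm_pos[of p a] exp_mean_pos[of "a - l"] by (simp add: Lp_norm_S_op[OF p] mult.commute)
qed

lemma exp_mean_ratio_tendsto:
  assumes k: "filterlim k at_top F" and l: "((\<lambda>x. l x / k x) \<longlongrightarrow> 0) F"
  shows "((\<lambda>x. exp_mean (- k x - l x) / exp_mean (- k x)) \<longlongrightarrow> 1) F"
proof -
  have exp_neg: "((\<lambda>x. exp (- x)) \<longlongrightarrow> (0::real)) at_top"
    by real_asymp
  have k_pos: "eventually (\<lambda>x. 0 < k x) F"
    using k by (simp add: filterlim_at_top_dense)
  have prod: "filterlim (\<lambda>x. (1 + l x / k x) * k x) at_top F"
    using tendsto_add[OF tendsto_const l, of 1] by (intro filterlim_tendsto_pos_mult_at_top[OF _ _ k]) auto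
  have "eventually (\<lambda>x. (1 + l x / k x) * k x = k x + l x) F"
    using k_pos by eventually_elim (simp add: field_simps)
  from iffD1[OF filterlim_cong[OF refl refl this] prod]
  have kl: "filterlim (\<lambda>x. k x + l x) at_top F" .
  then have kl_pos: "eventually (\<lambda>x. 0 < k x + l x) F"
    by (simp add: filterlim_at_top_dense)
  have "((\<lambda>x. (1 - exp (- (k x + l x))) / (1 - exp (- k x)) / (1 + l x / k x)) \<longlongrightarrow>
      (1 - 0) / (1 - 0) / (1 + 0)) F"
    by (intro tendsto_intros filterlim_compose[OF exp_neg] k kl l) auto
  moreover have "eventually (\<lambda>x. (1 - exp (- (k x + l x))) / (1 - exp (- k x)) / (1 + l x / k x) =
      exp_mean (- k x - l x) / exp_mean (- k x)) F"
    using k_pos kl_pos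
  proof eventually_elim
    case (elim x)
    have "exp (- k x) < 1"
      using elim(1) by simp
    have em1: "exp_mean (- k x - l x) = (1 - exp (- (k x + l x))) / (k x + l x)"
      using exp_mean_minus[of "k x + l x"] elim by simp
    have em2: "exp_mean (- k x) = (1 - exp (- k x)) / k x"
      using exp_mean_minus[of "k x"] elim by simp
    show ?case
      unfolding em1 em2 using elim \<open>exp (- k x) < 1\<close> by (simp add: field_simps)
  qed
  ultimately show ?thesis
    by (simp add: tendsto_cong)
qed

lemma exp_norm_conjugate_extremal:
  assumes P: "1 < P"
  shows "exp_mean (- l / (P - 1) - l) / exp_norm (ereal P) (- l / (P - 1))
    = exp_norm (conjugate_exponent (ereal P)) (-l)"
proof -
  define Q where "Q = P / (P - 1)"
  define J where "J = exp_mean (Q * - l)"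
  have J: "0 < J"
    by (simp add: J_def exp_mean_pos)
  have "- l / (P - 1) - l = Q * - l" "P * (- l / (P - 1)) = Q * - l"
    using P by (simp_all add: Q_def field_simps)
  then have "exp_mean (- l / (P - 1) - l) / exp_norm (ereal P) (- l / (P - 1)) = J powr 1 / J powr (1 / P)"
    using J by (simp add: exp_norm_ereal J_def)
  also have "\<dots> = J powr (1 - 1 / P)"
    by (rule powr_diff [symmetric])
  also have "1 - 1 / P = 1 / Q"
    using P by (simp add: Q_def field_simps)
  finally show ?thesis
    using P by (simp add: conjugate_exponent_ereal exp_norm_ereal Q_def J_def)
qed

lemma S_opnorm_eq:
  assumes p: "1 \<le> p" and l: "0 \<le> l"
  shows "S_opnorm p l = ereal (exp_norm p l * exp_norm (conjugate_exponent p) (-l))"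
proof (rule antisym[OF S_opnorm_le[OF p]])
  show "ereal (exp_norm p l * exp_norm (conjugate_exponent p) (-l)) \<le> S_opnorm p l"
    using p
  proof (cases rule: exponent_cases)
    case 1
    obtain r where r: "S_opnorm 1 l = ereal r"
      using S_opnorm_le[OF p, of l] S_opnorm_ge_exp[OF p, of l 0] 1
      by (cases "S_opnorm 1 l") auto
    have "exp_norm 1 l * (exp_mean (- k - l) / exp_mean (- k)) \<le> r" for k
      using S_opnorm_ge_exp[OF p, of l "- k"] 1 r by simp
    moreover have "((\<lambda>k. exp_mean (- k - l) / exp_mean (- k)) \<longlongrightarrow> 1) at_top"
      by (rule exp_mean_ratio_tendsto[OF filterlim_ident]) real_asymp
    ultimately have "exp_norm 1 l * 1 \<le> r"
      by (intro tendsto_upperbound[OF tendsto_mult_left] always_eventually) auto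
    then show ?thesis
      using 1 l r by (simp add: conjugate_exponent_def)
  next
    case 2
    then show ?thesis
      using S_opnorm_ge_exp[OF p, of l 0] by (simp add: conjugate_exponent_def)
  next
    case (3 P)
    from S_opnorm_ge_exp[OF p, of l "- l / (P - 1)"] show ?thesis
      unfolding 3(1) exp_norm_conjugate_extremal[OF 3(2)] .
  qed
qed

lemma exp_norm_conjugate_product:
  assumes P: "1 < P" and l: "0 < l"
  defines "Q \<equiv> P / (P - 1)"
  shows "exp_norm (ereal P) l * exp_norm (conjugate_exponent (ereal P)) (-l)
    = C_const (ereal P) * exp l / l * ((1 - exp (- (P * l))) powr (1 / P) * (1 - exp (- (Q * l))) powr (1 / Q))"
proof -
  have Q: "1 < Q" "1 / P + 1 / Q = 1"
    using conjugate_exponent_real[OF P] by (simp_all add: Q_def)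
  have pos: "0 < 1 - exp (- (P * l))" "0 < 1 - exp (- (Q * l))"
    using P Q l by simp_all
  have "exp (P * l) * (1 - exp (- (P * l))) = exp (P * l) - 1"
    by (simp add: algebra_simps exp_minus)
  then have "exp_norm (ereal P) l = (exp (P * l) * (1 - exp (- (P * l))) / (P * l)) powr (1 / P)"
    using P l by (simp add: exp_norm_ereal exp_mean_def)
  also have "\<dots> = exp l * (1 - exp (- (P * l))) powr (1 / P) / (P * l) powr (1 / P)"
    using P l pos by (simp add: powr_divide powr_mult exp_powr_real)
  finally have A: "exp_norm (ereal P) l = \<dots>" .
  have "exp_norm (conjugate_exponent (ereal P)) (-l) = ((1 - exp (- (Q * l))) / (Q * l)) powr (1 / Q)"
    using P Q l by (simp add: conjugate_exponent_ereal exp_norm_ereal exp_mean_minus Q_def [symmetric])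
  also have "\<dots> = (1 - exp (- (Q * l))) powr (1 / Q) / (Q * l) powr (1 / Q)"
    using Q l pos by (simp add: powr_divide)
  finally have B: "exp_norm (conjugate_exponent (ereal P)) (-l) = \<dots>" .
  have "l powr (1 / P) * l powr (1 / Q) = l"
    using Q(2) l by (simp flip: powr_add)
  then have "(P * l) powr (1 / P) * (Q * l) powr (1 / Q) = P powr (1 / P) * Q powr (1 / Q) * l"
    using P Q l by (simp add: powr_mult mult_ac)
  then have "(P * l) powr (1 / P) * (Q * l) powr (1 / Q) = l / C_const (ereal P)"
    using P Q l by (simp add: C_const_def Q_def one_ereal_def)
  then show ?thesis
    unfolding A B using P Q l pos by (simp add: field_simps)
qed

lemma exp_norm_conjugate_asymp:
  assumes p: "1 \<le> p"
  shows "(\<lambda>l. exp_norm p l * exp_norm (conjugate_exponent p) (-l)) \<sim>[at_top] (\<lambda>l. C_const p * exp l / l)"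
  using p
proof (cases rule: exponent_cases)
  case 1
  have "(\<lambda>l::real. (exp l - 1) / l) \<sim>[at_top] (\<lambda>l. 1 * exp l / l)"
    by real_asymp
  then show ?thesis
    by (rule asymp_equiv_transfer)
      (auto intro!: eventually_mono[OF eventually_gt_at_top[of 0]]
        simp: 1 conjugate_exponent_def C_const_def exp_mean_def)
next
  case 2
  have "(\<lambda>l::real. exp l * ((1 - exp (- l)) / l)) \<sim>[at_top] (\<lambda>l. 1 * exp l / l)"
    by real_asymp
  then show ?thesis
    by (rule asymp_equiv_transfer)
      (auto intro!: eventually_mono[OF eventually_gt_at_top[of 0]]
        simp: 2 conjugate_exponent_def C_const_def exp_mean_minus)
next
  case (3 P)
  define Q where "Q = P / (P - 1)"
  have PQ: "0 < P" "0 < Q"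
    using 3 conjugate_exponent_real[OF 3(2)] by (simp_all add: Q_def)
  have exp_neg: "((\<lambda>l. exp (- (c * l))) \<longlongrightarrow> 0) at_top" if "0 < c" for c :: real
    using that by real_asymp
  have "((\<lambda>l. (1 - exp (- (P * l))) powr (1 / P) * (1 - exp (- (Q * l))) powr (1 / Q)) \<longlongrightarrow>
      (1 - 0) powr (1 / P) * (1 - 0) powr (1 / Q)) at_top"
    by (intro tendsto_intros exp_neg PQ) auto
  then have "(\<lambda>l. C_const p * exp l / l * ((1 - exp (- (P * l))) powr (1 / P) * (1 - exp (- (Q * l))) powr (1 / Q)))
      \<sim>[at_top] (\<lambda>l. C_const p * exp l / l * 1)"
    by (intro asymp_equiv_mult asymp_equiv_refl tendsto_imp_asymp_equiv_const) simp_all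
  then show ?thesis
    by (rule asymp_equiv_transfer)
      (auto intro!: eventually_mono[OF eventually_gt_at_top[of 0]]
        simp: 3 exp_norm_conjugate_product Q_def)
qed

lemma f_ext_asymp_extremal:
  assumes p: "1 \<le> p" and g: "filterlim g at_top at_top"
  shows "(\<lambda>l. \<bar>exp_moment (-l) (f_ext p g l)\<bar>)
    \<sim>[at_top] (\<lambda>l. exp_norm (conjugate_exponent p) (-l) * real_of_ereal (Lp_norm p (f_ext p g l)))"
  using p
proof (cases rule: exponent_cases)
  case 1
  have f: "f_ext 1 g l = (\<lambda>t. 1 * exp (- (g l * l) * t))" for l
    by (simp add: f_ext_def fun_eq_iff)
  have moment: "\<bar>exp_moment (-l) (f_ext 1 g l)\<bar> = exp_mean (- (g l * l) - l)" for l
    unfolding f exp_moment_exp by simp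
  have norm: "real_of_ereal (Lp_norm 1 (f_ext 1 g l)) = exp_mean (- (g l * l))" for l
    unfolding f Lp_norm_exp[OF order_refl] by simp
  have k: "filterlim (\<lambda>l. g l * l) at_top at_top"
    by (rule filterlim_at_top_mult_at_top[OF g filterlim_ident])
  have "((\<lambda>l. l / (g l * l)) \<longlongrightarrow> 0) at_top"
  proof (rule Lim_transform_eventually[OF tendsto_inverse_0_at_top[OF g]])
    show "eventually (\<lambda>l. inverse (g l) = l / (g l * l)) at_top"
      using eventually_gt_at_top[of 0] by eventually_elim (simp add: inverse_eq_divide)
  qed
  from exp_mean_ratio_tendsto[OF k this]
  have "(\<lambda>l. exp_mean (- (g l * l) - l)) \<sim>[at_top] (\<lambda>l. exp_mean (- (g l * l)))"
    by (rule asymp_equivI')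
  then show ?thesis
    by (rule asymp_equiv_transfer)
      (auto intro!: eventually_mono[OF eventually_ge_at_top[of 0]]
        simp: 1 moment norm conjugate_exponent_def)
next
  case 2
  have f: "f_ext \<infinity> g l = (\<lambda>t. 1 * exp (0 * t))" for l
    by (simp add: f_ext_def fun_eq_iff)
  show ?thesis
    unfolding 2 f exp_moment_exp Lp_norm_exp_infinity by (simp add: conjugate_exponent_def)
next
  case (3 P)
  have f: "f_ext (ereal P) g l = (\<lambda>t. 1 * exp (- l / (P - 1) * t))" for l
    using 3 by (auto simp: f_ext_def one_ereal_def fun_eq_iff)
  have "exp_mean (- l / (P - 1) - l)
      = exp_norm (conjugate_exponent (ereal P)) (-l) * exp_norm (ereal P) (- l / (P - 1))" for l
    using exp_norm_conjugate_extremal[OF 3(2), of l] exp_norm_pos[of "ereal P" "- l / (P - 1)"]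
    by (simp add: field_simps)
  then show ?thesis
    unfolding 3(1) f exp_moment_exp Lp_norm_exp[OF p [unfolded 3(1)]]
    by (simp add: abs_mult abs_of_pos[OF exp_norm_pos])
qed

theorem lemma3p1:
  fixes p :: ereal
  assumes "1 \<le> p"
  shows "(\<lambda>l. real_of_ereal (S_opnorm p l)) \<sim>[at_top] (\<lambda>l. C_const p * exp l / l)
    \<and> (\<forall>g :: real \<Rightarrow> real. filterlim g at_top at_top \<longrightarrow>
         (\<lambda>l. real_of_ereal (Lp_norm p (S_op l (f_ext p g l))))
           \<sim>[at_top] (\<lambda>l. real_of_ereal (S_opnorm p l) * real_of_ereal (Lp_norm p (f_ext p g l))))"
proof (intro conjI allI impI)
  have opnorm: "eventually (\<lambda>l. exp_norm p l * exp_norm (conjugate_exponent p) (-l) = real_of_ereal (S_opnorm p l)) at_top"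
    using eventually_ge_at_top[of 0] by eventually_elim (simp add: S_opnorm_eq[OF assms])
  show "(\<lambda>l. real_of_ereal (S_opnorm p l)) \<sim>[at_top] (\<lambda>l. C_const p * exp l / l)"
    using exp_norm_conjugate_asymp[OF assms] opnorm by (rule asymp_equiv_transfer) simp
  fix g :: "real \<Rightarrow> real"
  assume g: "filterlim g at_top at_top"
  have "(\<lambda>l. \<bar>exp_moment (-l) (f_ext p g l)\<bar> * exp_norm p l)
    \<sim>[at_top] (\<lambda>l. exp_norm (conjugate_exponent p) (-l) * real_of_ereal (Lp_norm p (f_ext p g l)) * exp_norm p l)"
    by (intro asymp_equiv_mult f_ext_asymp_extremal[OF assms g] asymp_equiv_refl)
  then show "(\<lambda>l. real_of_ereal (Lp_norm p (S_op l (f_ext p g l))))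
    \<sim>[at_top] (\<lambda>l. real_of_ereal (S_opnorm p l) * real_of_ereal (Lp_norm p (f_ext p g l)))"
  proof (rule asymp_equiv_transfer)
    show "eventually (\<lambda>l. \<bar>exp_moment (-l) (f_ext p g l)\<bar> * exp_norm p l
      = real_of_ereal (Lp_norm p (S_op l (f_ext p g l)))) at_top"
      by (simp add: Lp_norm_S_op[OF assms])
    show "eventually (\<lambda>l. exp_norm (conjugate_exponent p) (-l) * real_of_ereal (Lp_norm p (f_ext p g l)) * exp_norm p l
      = real_of_ereal (S_opnorm p l) * real_of_ereal (Lp_norm p (f_ext p g l))) at_top"
      using opnorm by eventually_elim (simp add: mult_ac)
  qed
qed

end
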